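(* Assume the interventions are soft, one on each latent node, in the setting of the context. For each node $j\in[q]$ let $c_j=-1$ if $\operatorname{rank}M[j]\neq\operatorname{rank}(M[j]\,|\,b[j])$, and $c_j=|\mathrm{ch}(j)|-\operatorname{rank}M[j]$ otherwise. Then the ideal $\mathcal{I}$ has dimension $\dim\mathcal{I}=-1$ if $c_j=-1$ for some $j\in[q]$, and $\dim\mathcal{I}=\sum_{j=1}^q c_j$ otherwise.
   Context: Setting: $p,q\ge2$; a DAG $\mathcal{G}$ on $[q]$ with $\mathrm{ch}(j)=\{i: j\to i\in\mathcal{G}\}$ and $\mathrm{de}(j)$ the set of nodes $i\ne j$ reachable from $j$ by a directed path. True parameters: a generic $\widetilde F\in\mathbb{R}^{p\times q}$, a matrix $\widetilde\Lambda^{(0)}$ with $(\widetilde\Lambda^{(0)})_{i,j}\ne0$ iff $j\to i\in\mathcal{G}$ with generic nonzero entries, and for $k\in[q]$ a matrix $\widetilde\Lambda^{(k)}$ (soft intervention on node $k$) agreeing with $\widetilde\Lambda^{(0)}$ except in row $k$, whose nonzero entries are generic, supported on the same positions, and all differ from those of $\widetilde\Lambda^{(0)}$. Set $A^{(k)}=\widetilde F(I-\widetilde\Lambda^{(k)})^{-1}$ for $k=0,\dots,q$, and $\Delta^{(k)}=(I-\widetilde\Lambda^{(k)})^{-1}-(I-\widetilde\Lambda^{(0)})^{-1}$. Let $\mathcal{I}$ be the ideal generated by the entries of $F-A^{(k)}(I-\Lambda^{(k)})$, $k=0,\dots,q$, in the polynomial ring whose indeterminates are the entries $f_{\ell,j}$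 of $F$ ($\ell\in[p],j\in[q]$), $\lambda^{(0)}_{i,j}$ for each edge $j\to i$ of $\mathcal{G}$, and $\lambda^{(k)}_{k,j}$ for each edge $j\to k$ of $\mathcal{G}$; here $\Lambda^{(0)}$ has entries $\lambda^{(0)}_{i,j}$ on edges and $0$ elsewhere, and $\Lambda^{(k)}$ equals $\Lambda^{(0)}$ with row $k$ replaced by the $\lambda^{(k)}_{k,j}$. $\dim\mathcal{I}$ is the dimension of the affine variety of $\mathcal{I}$ (equal to $-1$ if empty). For $j\in[q]$, $M[j]$ is the matrix with rows indexed by $k\in\mathrm{de}(j)\setminus\mathrm{ch}(j)$, columns by $i\in\mathrm{ch}(j)$, and entries $\Delta^{(k)}_{k,i}$; $b[j]$ is the column vector indexed by $k\in\mathrm{de}(j)\setminus\mathrm{ch}(j)$ with entries $\Delta^{(k)}_{k,j}$; $(M[j]\,|\,b[j])$ is the augmented matrix. *)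

theory Defs
  imports "HOL-Analysis.Analysis"
begin

inductive poly_fun :: "('a::euclidean_space \<Rightarrow> real) \<Rightarrow> bool" where
  pf_const: "poly_fun (\<lambda>x. c)"
| pf_lin: "poly_fun (\<lambda>x. inner b x)"
| pf_add: "poly_fun f \<Longrightarrow> poly_fun g \<Longrightarrow> poly_fun (\<lambda>x. f x + g x)"
| pf_mult: "poly_fun f \<Longrightarrow> poly_fun g \<Longrightarrow> poly_fun (\<lambda>x. f x * g x)"

definition generically_on :: "'a::euclidean_space set \<Rightarrow> ('a \<Rightarrow> bool) \<Rightarrow> bool" where
  "generically_on V Q \<longleftrightarrow>
     (\<exists>P. poly_fun P \<and> (\<exists>x\<in>V. P x \<noteq> 0) \<and> (\<forall>x\<in>V. P x \<noteq> 0 \<longrightarrow> Q x))"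

text \<open>Graph: (j,i) \<in> E means the edge j \<rightarrow> i.\<close>
definition ch :: "('q \<times> 'q) set \<Rightarrow> 'q \<Rightarrow> 'q set" where
  "ch E j = {i. (j, i) \<in> E}"

definition de :: "('q \<times> 'q) set \<Rightarrow> 'q \<Rightarrow> 'q set" where
  "de E j = {i. i \<noteq> j \<and> (j, i) \<in> E\<^sup>+}"

definition lam_int :: "real^'q^'q \<Rightarrow> real^'q^'q \<Rightarrow> 'q \<Rightarrow> real^'q^'q" where
  "lam_int L0 R k = (\<chi> i. if i = k then R $ k else L0 $ i)"

definition edge_supported :: "('q \<times> 'q) set \<Rightarrow> real^'q^'q \<Rightarrow> bool" where
  "edge_supported E L \<longleftrightarrow> (\<forall>i j. (j, i) \<notin> E \<longrightarrow> L $ i $ j = 0)"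

text \<open>Parameter space: (F, Lambda^(0), R) with the relevant supports; row k of R
  holds the entries lambda^(k)_{k,j}.\<close>
definition param_space :: "('q::finite \<times> 'q) set \<Rightarrow> ((real^'q^'p) \<times> (real^'q^'q) \<times> (real^'q^'q)) set" where
  "param_space E = {(F, L0, R). edge_supported E L0 \<and> edge_supported E R}"

definition A_mat :: "real^'q^'p \<Rightarrow> real^'q^'q \<Rightarrow> real^'q^'p" where
  "A_mat F L = F ** matrix_inv (mat 1 - L)"

text \<open>The (real points of the) affine variety of the ideal I, for true parameters
  (Ft, L0t, Rt). All generators are affine-linear in the unknowns.\<close>
definition ideal_variety ::
  "('q::finite \<times> 'q) set \<Rightarrow> real^'q^'p \<Rightarrow> real^'q^'q \<Rightarrow> real^'q^'q
     \<Rightarrow> ((real^'q^'p) \<times> (real^'q^'q) \<times> (real^'q^'q)) set" where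
  "ideal_variety E Ft L0t Rt =
     {(F, L0, R). (F, L0, R) \<in> param_space E
        \<and> F = A_mat Ft L0t ** (mat 1 - L0)
        \<and> (\<forall>k. F = A_mat Ft (lam_int L0t Rt k) ** (mat 1 - lam_int L0 R k))}"

definition Delta :: "real^'q^'q \<Rightarrow> real^'q^'q \<Rightarrow> 'q \<Rightarrow> real^'q^'q" where
  "Delta L0t Rt k = matrix_inv (mat 1 - lam_int L0t Rt k) - matrix_inv (mat 1 - L0t)"

text \<open>M[j] and (M[j] | b[j]), padded with zero rows/columns to q x q matrices
  (row k, column i; the column of b[j] is placed at index j, which is not a child of j).\<close>
definition M_mat :: "('q::finite \<times> 'q) set \<Rightarrow> real^'q^'q \<Rightarrow> real^'q^'q \<Rightarrow> 'q \<Rightarrow> real^'q^'q" where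
  "M_mat E L0t Rt j = (\<chi> k i. if k \<in> de E j - ch E j \<and> i \<in> ch E j
                                then Delta L0t Rt k $ k $ i else 0)"

definition Mb_mat :: "('q::finite \<times> 'q) set \<Rightarrow> real^'q^'q \<Rightarrow> real^'q^'q \<Rightarrow> 'q \<Rightarrow> real^'q^'q" where
  "Mb_mat E L0t Rt j = (\<chi> k i. if k \<in> de E j - ch E j \<and> (i \<in> ch E j \<or> i = j)
                                 then Delta L0t Rt k $ k $ i else 0)"

definition c_val :: "('q::finite \<times> 'q) set \<Rightarrow> real^'q^'q \<Rightarrow> real^'q^'q \<Rightarrow> 'q \<Rightarrow> int" where
  "c_val E L0t Rt j =
     (if rank (M_mat E L0t Rt j) \<noteq> rank (Mb_mat E L0t Rt j) then -1
      else int (card (ch E j)) - int (rank (M_mat E L0t Rt j)))"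

end

(*
  Write B0 = (I - L0t)^-1, a finite Neumann series since L0t is nilpotent on the DAG, and
  W = (Rt - L0t) B0, where row k of Rt is the intervened row of Lambda^(k).  Lambda^(k) differs
  from Lambda^(0) only in row k and W has zero diagonal, so (I - Lambda^(k))^-1 is the rank-one
  update B0 + B0 e_k e_k^T W; in particular Delta^(k) has k-th row W_{k,.}.

  In the unknowns U = L0t - L0 the generators of the ideal read F = Ft + A U and
  A e_k e_k^T (Rt - R - U + W U) = 0 for all k, where A = A^(0).  As soon as one row of A has
  no zero entry (a generic condition) this forces R = Rt - U + W U, so the variety is an affine
  copy of the space of edge-supported U with W U edge-supported.  That space splits over the
  columns of U: the column at j is supported on ch(j) and lies in the kernel of M[j], which
  contributes |ch(j)| - rank M[j].

  Finally W = (Rt - L0t) + W L0t gives b[j] = M[j] (L0t)_{.,j}, so rank M[j] = rank (M[j] | b[j])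
  always: the value -1 never occurs.
*)

theory Submission
  imports Defs
begin

lemma matrix_add_rdistrib: "((A::'a::semiring_1^'n^'m) + B) ** C = A ** C + B ** C"
  by (vector matrix_matrix_mult_def sum.distrib[symmetric] field_simps)

lemma matrix_diff_ldistrib: "(A::'a::ring_1^'n^'m) ** (B - C) = A ** B - A ** C"
  by (vector matrix_matrix_mult_def sum_subtractf[symmetric] field_simps)

lemma matrix_diff_rdistrib: "((A::'a::ring_1^'n^'m) - B) ** C = A ** C - B ** C"
  by (vector matrix_matrix_mult_def sum_subtractf[symmetric] field_simps)

lemma matrix_mult_entry_nonzero:
  fixes A :: "'a::semiring_1^'n^'m"
  assumes "(A ** B) $ i $ j \<noteq> 0"
  obtains m where "A $ i $ m \<noteq> 0" "B $ m $ j \<noteq> 0"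
proof -
  have "\<exists>m. A $ i $ m * B $ m $ j \<noteq> 0"
  proof (rule ccontr)
    assume "\<nexists>m. A $ i $ m * B $ m $ j \<noteq> 0"
    then have "(A ** B) $ i $ j = 0"
      by (simp add: matrix_matrix_mult_def)
    with assms show False ..
  qed
  then show thesis
    using that by (metis mult_zero_left mult_zero_right)
qed

lemma matrix_inv_eq_right_inverse:
  fixes A B :: "'a::field^'n^'n"
  assumes "A ** B = mat 1"
  shows "matrix_inv A = B"
proof -
  have BA: "B ** A = mat 1"
    using assms matrix_left_right_inverse by blast
  have inv: "A ** matrix_inv A = mat 1 \<and> matrix_inv A ** A = mat 1"
    unfolding matrix_inv_def by (rule someI[where x = B]) (simp add: assms BA)
  have "matrix_inv A = matrix_inv A ** (A ** B)"
    using assms by simp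
  also have "\<dots> = B"
    using inv by (simp add: matrix_mul_assoc)
  finally show ?thesis .
qed

definition mat_unit :: "'n \<Rightarrow> 'a::zero_neq_one^'n^'n" where
  "mat_unit k = (\<chi> i j. if i = k \<and> j = k then 1 else 0)"

lemma mat_unit_mult_entry: "(mat_unit k ** A) $ i $ j = (if i = k then A $ k $ j else 0)"
  by (simp add: matrix_matrix_mult_def mat_unit_def if_distrib if_distribR cong: if_cong)

lemma mult_mat_unit_entry: "(A ** mat_unit k) $ i $ j = (if j = k then A $ i $ k else 0)"
  by (simp add: matrix_matrix_mult_def mat_unit_def if_distrib if_distribR cong: if_cong)

lemma mult_mat_unit_mult_entry: "(A ** mat_unit k ** B) $ i $ j = A $ i $ k * B $ k $ j"
  unfolding matrix_matrix_mult_def[of "A ** mat_unit k"]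
  by (simp add: mult_mat_unit_entry if_distrib[where f = "\<lambda>x. x * _"] cong: if_cong)

lemma all_mult_mat_unit_mult_eq_0_iff:
  fixes A :: "'a::{semiring_1, semiring_no_zero_divisors}^'n^'m"
  assumes "\<forall>k. A $ l $ k \<noteq> 0"
  shows "(\<forall>k. A ** mat_unit k ** Y = 0) \<longleftrightarrow> Y = 0"
proof
  assume "\<forall>k. A ** mat_unit k ** Y = 0"
  then have "A $ l $ k * Y $ k $ j = 0" for k j
    by (metis mult_mat_unit_mult_entry zero_index)
  with assms show "Y = 0"
    by (simp add: vec_eq_iff)
qed simp

lemma lam_int_eq: "lam_int L R k = L + mat_unit k ** (R - L)"
  by (simp add: lam_int_def vec_eq_iff mat_unit_mult_entry)

section \<open>Nilpotent matrices supported on a DAG\<close>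

lemma acyclic_relpow_empty:
  fixes E :: "('a::finite \<times> 'a) set"
  assumes acyclic: "acyclic E" and n: "CARD('a) \<le> n"
  shows "E ^^ n = {}"
proof -
  define depth where "depth i = card {a. (a, i) \<in> E\<^sup>+}" for i
  have depth_edge: "depth a < depth b" if "(a, b) \<in> E" for a b
  proof -
    have "{c. (c, a) \<in> E\<^sup>+} \<subseteq> {c. (c, b) \<in> E\<^sup>+}"
      using that by (auto intro: trancl_into_trancl)
    moreover have "a \<in> {c. (c, b) \<in> E\<^sup>+} - {c. (c, a) \<in> E\<^sup>+}"
      using that acyclic by (auto simp: acyclic_def)
    ultimately show ?thesis
      unfolding depth_def by (metis psubset_card_mono finite psubsetI Diff_iff)
  qed
  have depth_relpow: "depth a + m \<le> depth b" if "(a, b) \<in> E ^^ m" for a b m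
    using that
  proof (induction m arbitrary: b)
    case (Suc m)
    then obtain c where "(a, c) \<in> E ^^ m" "(c, b) \<in> E"
      by auto
    then show ?case
      using Suc.IH depth_edge by fastforce
  qed simp
  have depth_bound: "depth b < CARD('a)" for b
  proof -
    have "{a. (a, b) \<in> E\<^sup>+} \<subseteq> UNIV - {b}"
      using acyclic by (auto simp: acyclic_def)
    then show ?thesis
      unfolding depth_def by (metis card_Diff1_less card_mono finite finite_UNIV le_less_trans UNIV_I)
  qed
  have "(a, b) \<notin> E ^^ n" for a b
  proof
    assume "(a, b) \<in> E ^^ n"
    then have "depth a + n \<le> depth b"
      by (rule depth_relpow)
    with depth_bound[of b] n show False
      by linarith
  qed
  then show ?thesis
    by auto
qed

fun mat_pow :: "'a::semiring_1^'n^'n \<Rightarrow> nat \<Rightarrow> 'a^'n^'n" where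
  "mat_pow L 0 = mat 1"
| "mat_pow L (Suc n) = L ** mat_pow L n"

definition neumann_sum :: "'a::semiring_1^'n^'n \<Rightarrow> 'a^'n^'n" where
  "neumann_sum L = (\<Sum>n<CARD('n). mat_pow L n)"

lemma mat_pow_entry_nonzero_relpow:
  assumes "edge_supported E L" and "mat_pow L n $ i $ j \<noteq> 0"
  shows "(j, i) \<in> E ^^ n"
  using assms(2)
proof (induction n arbitrary: i)
  case 0
  then show ?case
    by (simp add: mat_def split: if_splits)
next
  case (Suc n)
  then obtain m where "L $ i $ m \<noteq> 0" "mat_pow L n $ m $ j \<noteq> 0"
    by (auto elim: matrix_mult_entry_nonzero)
  then show ?case
    using assms(1) Suc.IH unfolding edge_supported_def by auto
qed

lemma mat_pow_eq_0_if_acyclic: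
  fixes E :: "('n::finite \<times> 'n) set"
  assumes "acyclic E" "edge_supported E L" "CARD('n) \<le> n"
  shows "mat_pow L n = 0"
  using mat_pow_entry_nonzero_relpow[OF assms(2)] acyclic_relpow_empty[OF assms(1,3)]
  by (auto simp: vec_eq_iff)

lemma one_minus_mult_sum_mat_pow:
  fixes L :: "'a::ring_1^'n^'n"
  shows "(mat 1 - L) ** (\<Sum>n<N. mat_pow L n) = mat 1 - mat_pow L N"
  by (induction N) (simp_all add: matrix_add_ldistrib matrix_diff_rdistrib)

lemma matrix_inv_one_minus_edge_supported:
  fixes E :: "('n::finite \<times> 'n) set" and L :: "real^'n^'n"
  assumes "acyclic E" "edge_supported E L"
  shows "(mat 1 - L) ** neumann_sum L = mat 1"
    and "matrix_inv (mat 1 - L) = neumann_sum L"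
proof -
  show "(mat 1 - L) ** neumann_sum L = mat 1"
    unfolding neumann_sum_def one_minus_mult_sum_mat_pow
    using mat_pow_eq_0_if_acyclic[OF assms] by simp
  then show "matrix_inv (mat 1 - L) = neumann_sum L"
    by (rule matrix_inv_eq_right_inverse)
qed

lemma neumann_sum_entry_nonzero_rtrancl:
  assumes "edge_supported E L" and "neumann_sum L $ i $ j \<noteq> 0"
  shows "(j, i) \<in> E\<^sup>*"
proof -
  obtain n where "mat_pow L n $ i $ j \<noteq> 0"
    using assms(2) sum.neutral[of _ "\<lambda>n. mat_pow L n $ i $ j"]
    unfolding neumann_sum_def sum_component by blast
  then show ?thesis
    using mat_pow_entry_nonzero_relpow[OF assms(1)] relpow_imp_rtrancl by blast
qed

section \<open>Kernels and column spaces\<close>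

lemma dim_kernel_plus_dim_image:
  fixes f :: "'a::euclidean_space \<Rightarrow> 'b::euclidean_space"
  assumes f: "linear f" and S: "subspace S"
  shows "dim {x\<in>S. f x = 0} + dim (f ` S) = dim S"
proof -
  define K where "K = {x\<in>S. f x = 0}"
  \<comment> \<open>\<open>f\<close> is injective on the orthogonal complement \<open>C\<close> of the kernel
    and maps it onto \<open>f ` S\<close>\<close>
  define C where "C = {y\<in>S. \<forall>x\<in>K. orthogonal x y}"
  have "subspace K"
    unfolding K_def using S f by (auto simp: subspace_def linear_0 linear_add linear_scale)
  have "subspace C"
    using S unfolding C_def subspace_def by (auto simp: orthogonal_clauses)
  have dim_C: "dim C + dim K = dim S"
    using dim_subspace_orthogonal_to_vectors[OF \<open>subspace K\<close> S] unfolding C_def K_def by auto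
  have "f ` S \<subseteq> f ` C"
  proof
    fix w assume "w \<in> f ` S"
    then obtain s where s: "s \<in> S" "w = f s" by auto
    obtain y z where yz: "y \<in> span K" "\<And>u. u \<in> span K \<Longrightarrow> orthogonal z u" "s = y + z"
      using orthogonal_subspace_decomp_exists by blast
    have "y \<in> K"
      using yz(1) \<open>subspace K\<close> by (metis span_eq_iff)
    then have "z \<in> C"
      using yz s(1) S unfolding C_def K_def
      by (auto simp: subspace_diff orthogonal_commute span_base dest: subspace_diff[of S s y])
    moreover have "w = f z"
      using s yz(3) \<open>y \<in> K\<close> f unfolding K_def by (simp add: linear_add)
    ultimately show "w \<in> f ` C" by blast
  qed
  moreover have "C \<subseteq> S" unfolding C_def by auto
  ultimately have "f ` S = f ` C" by blast
  moreover have "inj_on f (span C)"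
  proof (rule inj_onI)
    fix a b assume ab: "a \<in> span C" "b \<in> span C" "f a = f b"
    then have "a - b \<in> C"
      using \<open>subspace C\<close> by (metis span_eq_iff subspace_diff)
    moreover have "f (a - b) = 0"
      using ab(3) f by (simp add: linear_diff)
    ultimately have "orthogonal (a - b) (a - b)"
      unfolding C_def K_def by auto
    then show "a = b" by (simp add: orthogonal_def)
  qed
  ultimately show ?thesis
    using dim_C dim_image_eq[OF f] unfolding K_def by simp
qed

lemma dim_columns_in_subspaces:
  fixes S :: "'n::finite \<Rightarrow> (real^'m) set"
  assumes S: "\<And>j. subspace (S j)"
  shows "dim {U :: real^'n^'m. \<forall>j. column j U \<in> S j} = (\<Sum>j\<in>UNIV. dim (S j))"
proof -
  define P where
    "P J = {U :: real^'n^'m. \<forall>j. column j U \<in> S j \<and> (j \<notin> J \<longrightarrow> column j U = 0)}" for J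
  have column_linear: "linear (column j :: real^'n^'m \<Rightarrow> real^'m)" for j
    by (rule linearI) (simp_all add: column_def vec_eq_iff)
  have P: "subspace (P J)" for J
    unfolding P_def
    by (rule subspaceI)
      (simp_all add: linear_add[OF column_linear] linear_scale[OF column_linear] linear_0[OF column_linear]
        subspace_0[OF S] subspace_add[OF S] subspace_mul[OF S])
  have "dim (P J) = (\<Sum>j\<in>J. dim (S j))" for J
  proof (induction J rule: finite_induct[OF finite])
    case 1
    have "U = 0" if "\<forall>j. column j U = 0" for U :: "real^'n^'m"
      using that by (simp add: column_def vec_eq_iff)
    then have "P {} = {0}"
      unfolding P_def using linear_0[OF column_linear] subspace_0[OF S] by auto
    then show ?case by simp
  next
    case (2 a J)
    have "{U \<in> P (insert a J). column a U = 0} = P J"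
      using 2 unfolding P_def by auto
    moreover have "column a ` P (insert a J) = S a"
    proof
      show "S a \<subseteq> column a ` P (insert a J)"
      proof
        fix v assume "v \<in> S a"
        moreover have "column j (\<chi> i j. if j = a then v $ i else 0) = (if j = a then v else 0)" for j
          by (simp add: column_def vec_eq_iff)
        ultimately have "(\<chi> i j. if j = a then v $ i else 0) \<in> P (insert a J)"
          unfolding P_def by (simp add: subspace_0[OF S])
        moreover have "column a (\<chi> i j. if j = a then v $ i else 0) = v"
          by (simp add: column_def vec_eq_iff)
        ultimately show "v \<in> column a ` P (insert a J)"
          by (metis image_eqI)
      qed
    qed (auto simp: P_def)
    ultimately have "dim (P J) + dim (S a) = dim (P (insert a J))"
      using dim_kernel_plus_dim_image[OF column_linear[of a] P[of "insert a J"]] by simp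
    then show ?case
      using 2 by simp
  qed
  from this[of UNIV] show ?thesis
    unfolding P_def by simp
qed

lemma rank_eq_if_extra_column_in_column_space:
  fixes A B :: "real^'n^'m"
  assumes other: "\<And>i. i \<noteq> j \<Longrightarrow> column i B = column i A"
    and zero: "column j A = 0" and extra: "column j B = A *v v"
  shows "rank B = rank A"
proof -
  have B_mult: "B *v x = A *v (x + x $ j *s v)" for x
  proof -
    have "(\<Sum>i\<in>UNIV - {j}. x $ i *s column i B) = (\<Sum>i\<in>UNIV - {j}. x $ i *s column i A)"
      by (rule sum.cong) (auto simp: other)
    then have "B *v x = (\<Sum>i\<in>UNIV. x $ i *s column i A) + x $ j *s column j B"
      unfolding matrix_mult_sum
      using zero sum.remove[of UNIV j "\<lambda>i. x $ i *s column i B"]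
        sum.remove[of UNIV j "\<lambda>i. x $ i *s column i A"]
      by simp
    then show ?thesis
      by (simp add: extra matrix_mult_sum[symmetric] matrix_vector_right_distrib
          vector_scalar_commute)
  qed
  have A_mult: "A *v x = B *v (\<chi> i. if i = j then 0 else x $ i)" for x
    unfolding matrix_mult_sum
    by (rule sum.cong) (auto simp: other zero)
  have "range ((*v) B) = range ((*v) A)"
    using B_mult A_mult by blast
  then show ?thesis
    by (simp add: rank_dim_range)
qed

section \<open>The linear structure of the ideal variety\<close>

lemma edge_supported_add:
  "edge_supported E A \<Longrightarrow> edge_supported E B \<Longrightarrow> edge_supported E (A + B)"
  by (simp add: edge_supported_def)

lemma edge_supported_diff:
  "edge_supported E A \<Longrightarrow> edge_supported E B \<Longrightarrow> edge_supported E (A - B)"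
  by (simp add: edge_supported_def)

locale soft_interventions =
  fixes E :: "('q::finite \<times> 'q) set" and L0t Rt :: "real^'q^'q"
  assumes acyclic: "acyclic E"
    and L0t_supported: "edge_supported E L0t" and Rt_supported: "edge_supported E Rt"
begin

definition B0 :: "real^'q^'q" where
  "B0 = matrix_inv (mat 1 - L0t)"

definition W :: "real^'q^'q" where
  "W = (Rt - L0t) ** B0"

lemma B0_eq_neumann_sum: "B0 = neumann_sum L0t"
  unfolding B0_def by (rule matrix_inv_one_minus_edge_supported(2)[OF acyclic L0t_supported])

lemma right_inverse_B0: "(mat 1 - L0t) ** B0 = mat 1"
  unfolding B0_eq_neumann_sum by (rule matrix_inv_one_minus_edge_supported(1)[OF acyclic L0t_supported])

lemma left_inverse_B0: "B0 ** (mat 1 - L0t) = mat 1"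
  using right_inverse_B0 matrix_left_right_inverse by blast

lemma not_trancl_refl: "(i, i) \<notin> E\<^sup>+"
  using acyclic by (simp add: acyclic_def)

lemma L0t_entry_nonzero: "L0t $ i $ j \<noteq> 0 \<Longrightarrow> (j, i) \<in> E"
  using L0t_supported unfolding edge_supported_def by blast

lemma B0_entry_nonzero: "B0 $ i $ j \<noteq> 0 \<Longrightarrow> (j, i) \<in> E\<^sup>*"
  unfolding B0_eq_neumann_sum by (rule neumann_sum_entry_nonzero_rtrancl[OF L0t_supported])

lemma W_entry_nonzero: "W $ i $ j \<noteq> 0 \<Longrightarrow> (j, i) \<in> E\<^sup>+"
proof -
  assume "W $ i $ j \<noteq> 0"
  then obtain m where "(Rt - L0t) $ i $ m \<noteq> 0" "B0 $ m $ j \<noteq> 0"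
    unfolding W_def by (rule matrix_mult_entry_nonzero)
  then have "(m, i) \<in> E" "(j, m) \<in> E\<^sup>*"
    using L0t_supported Rt_supported B0_entry_nonzero unfolding edge_supported_def by force+
  then show ?thesis
    by (meson rtrancl_into_trancl1)
qed

lemma W_diag: "W $ k $ k = 0"
  using W_entry_nonzero not_trancl_refl by blast

lemma B0_diag: "B0 $ k $ k = 1"
proof -
  have "(L0t ** B0) $ k $ k = 0"
  proof (rule ccontr)
    assume "(L0t ** B0) $ k $ k \<noteq> 0"
    then obtain m where "L0t $ k $ m \<noteq> 0" "B0 $ m $ k \<noteq> 0"
      by (rule matrix_mult_entry_nonzero)
    then have "(k, k) \<in> E\<^sup>+"
      using L0t_entry_nonzero B0_entry_nonzero by (meson rtrancl_into_trancl1)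
    then show False
      using not_trancl_refl by blast
  qed
  moreover have "B0 = mat 1 + L0t ** B0"
    using right_inverse_B0 by (simp add: matrix_diff_rdistrib diff_eq_eq)
  then have "B0 $ k $ k = (mat 1 + L0t ** B0) $ k $ k"
    by simp
  ultimately show ?thesis
    by (simp add: mat_def)
qed

lemma W_eq: "W = (Rt - L0t) + W ** L0t"
proof -
  have "W ** (mat 1 - L0t) = Rt - L0t"
    unfolding W_def by (simp add: matrix_mul_assoc[symmetric] left_inverse_B0)
  then show ?thesis
    by (simp add: matrix_diff_ldistrib algebra_simps)
qed

lemma unit_W_unit: "mat_unit k ** W ** mat_unit k = 0"
  by (simp add: vec_eq_iff mult_mat_unit_entry mat_unit_mult_entry W_diag)

lemma inverse_lam_int: "matrix_inv (mat 1 - lam_int L0t Rt k) = B0 + B0 ** mat_unit k ** W"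
proof (rule matrix_inv_eq_right_inverse)
  define X where "X = mat 1 - L0t"
  define U where "U = mat_unit k ** (Rt - L0t)"
  have "mat 1 - lam_int L0t Rt k = X - U"
    unfolding X_def U_def by (simp add: lam_int_eq)
  moreover have "X ** B0 = mat 1"
    unfolding X_def by (rule right_inverse_B0)
  moreover have "X ** (B0 ** mat_unit k ** W) = mat_unit k ** W"
    by (simp add: matrix_mul_assoc \<open>X ** B0 = mat 1\<close>)
  moreover have "U ** B0 = mat_unit k ** W"
    unfolding U_def by (simp add: matrix_mul_assoc W_def)
  moreover have "U ** (B0 ** mat_unit k ** W) = 0"
    using unit_W_unit unfolding U_def by (simp add: matrix_mul_assoc W_def)
  ultimately show "(mat 1 - lam_int L0t Rt k) ** (B0 + B0 ** mat_unit k ** W) = mat 1"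
    by (simp add: matrix_add_ldistrib matrix_diff_rdistrib)
qed

lemma Delta_row: "Delta L0t Rt k $ k $ j = W $ k $ j"
  unfolding Delta_def inverse_lam_int B0_def[symmetric]
  by (simp add: mult_mat_unit_mult_entry B0_diag)

lemma A_mat_L0t: "A_mat F L0t = F ** B0"
  by (simp add: A_mat_def B0_def)

lemma A_mat_lam_int: "A_mat F (lam_int L0t Rt k) = F ** B0 + F ** B0 ** mat_unit k ** W"
  by (simp add: A_mat_def inverse_lam_int matrix_add_ldistrib matrix_mul_assoc)

lemma observational_equation: "A_mat F L0t ** (mat 1 - L0) = F + A_mat F L0t ** (L0t - L0)"
proof -
  have "A_mat F L0t ** (mat 1 - L0) = F ** B0 ** ((mat 1 - L0t) + (L0t - L0))"
    by (simp add: A_mat_L0t)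
  also have "\<dots> = F ** (B0 ** (mat 1 - L0t)) + A_mat F L0t ** (L0t - L0)"
    by (simp only: matrix_add_ldistrib matrix_mul_assoc A_mat_L0t)
  finally show ?thesis
    by (simp add: left_inverse_B0)
qed

lemma interventional_equation:
  "A_mat F (lam_int L0t Rt k) ** (mat 1 - lam_int L0 R k) =
     F + A_mat F L0t ** (L0t - L0)
       + A_mat F L0t ** mat_unit k ** (Rt - R - (L0t - L0) + W ** (L0t - L0))"
proof -
  define X where "X = mat 1 - L0t"
  define A0 where "A0 = F ** B0"
  have A0_X: "A0 ** X = F"
    unfolding A0_def X_def by (simp add: matrix_mul_assoc[symmetric] left_inverse_B0)
  have W_X: "A0 ** mat_unit k ** W ** X = A0 ** mat_unit k ** (Rt - L0t)"
    unfolding W_def X_def by (simp add: matrix_mul_assoc[symmetric] left_inverse_B0)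
  have "A0 ** mat_unit k ** W ** mat_unit k = A0 ** (mat_unit k ** W ** mat_unit k)"
    by (simp add: matrix_mul_assoc)
  then have A0_unit_W_unit: "A0 ** mat_unit k ** W ** mat_unit k = 0"
    by (simp add: unit_W_unit)
  have "A_mat F (lam_int L0t Rt k) ** (mat 1 - lam_int L0 R k)
      = (A0 + A0 ** mat_unit k ** W) ** (X + L0t - (L0 + mat_unit k ** (R - L0)))"
    by (simp add: A_mat_lam_int lam_int_eq[of L0 R] X_def A0_def)
  also have "\<dots> = F + A0 ** (L0t - L0) + A0 ** mat_unit k ** (Rt - R - (L0t - L0) + W ** (L0t - L0))"
    by (simp add: matrix_add_ldistrib matrix_add_rdistrib matrix_diff_ldistrib matrix_diff_rdistrib
        matrix_mul_assoc A0_X W_X A0_unit_W_unit algebra_simps)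
  finally show ?thesis
    by (simp add: A_mat_L0t A0_def)
qed

definition shift_space :: "(real^'q^'q) set" where
  "shift_space = {U. edge_supported E U \<and> edge_supported E (W ** U)}"

lemma subspace_shift_space: "subspace shift_space"
  unfolding shift_space_def
  by (rule subspaceI)
    (simp_all add: edge_supported_def matrix_add_ldistrib matrix_scalar_ac
      scalar_matrix_assoc[symmetric])

lemma mem_ideal_variety_iff:
  "(F, L0, R) \<in> ideal_variety E Ft L0t Rt \<longleftrightarrow>
     edge_supported E L0 \<and> edge_supported E R \<and> F = Ft + A_mat Ft L0t ** (L0t - L0) \<and>
     (\<forall>k. A_mat Ft L0t ** mat_unit k ** (Rt - R - (L0t - L0) + W ** (L0t - L0)) = 0)"
  by (auto simp: ideal_variety_def param_space_def observational_equation interventional_equation)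

lemma ideal_variety_eq:
  assumes row: "\<forall>k. A_mat Ft L0t $ l $ k \<noteq> 0"
  shows "ideal_variety E Ft L0t Rt =
    (\<lambda>U. (Ft + A_mat Ft L0t ** U, L0t - U, Rt - U + W ** U)) ` shift_space"
    (is "_ = ?shift ` _")
proof
  show "ideal_variety E Ft L0t Rt \<subseteq> ?shift ` shift_space"
  proof clarify
    fix F L0 R assume "(F, L0, R) \<in> ideal_variety E Ft L0t Rt"
    then have L0: "edge_supported E L0" and R: "edge_supported E R"
      and F: "F = Ft + A_mat Ft L0t ** (L0t - L0)"
      and "Rt - R - (L0t - L0) + W ** (L0t - L0) = 0"
      unfolding mem_ideal_variety_iff all_mult_mat_unit_mult_eq_0_iff[OF row] by auto
    then have R_eq: "R = Rt - (L0t - L0) + W ** (L0t - L0)"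
      by (simp add: algebra_simps)
    have "edge_supported E (L0t - L0)"
      by (rule edge_supported_diff[OF L0t_supported L0])
    moreover have "edge_supported E (W ** (L0t - L0))"
      using edge_supported_add[OF edge_supported_diff[OF R Rt_supported] calculation]
      by (simp add: R_eq)
    ultimately have "L0t - L0 \<in> shift_space"
      unfolding shift_space_def by simp
    then show "(F, L0, R) \<in> ?shift ` shift_space"
      using F R_eq by (auto intro!: image_eqI[where x = "L0t - L0"])
  qed
  show "?shift ` shift_space \<subseteq> ideal_variety E Ft L0t Rt"
  proof clarify
    fix U assume "U \<in> shift_space"
    then show "?shift U \<in> ideal_variety E Ft L0t Rt"
      unfolding mem_ideal_variety_iff shift_space_def
      by (simp add: edge_supported_diff edge_supported_add L0t_supported Rt_supported)
  qed
qed

lemma aff_dim_ideal_variety: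
  assumes "\<forall>k. A_mat Ft L0t $ l $ k \<noteq> 0"
  shows "aff_dim (ideal_variety E Ft L0t Rt) = int (dim shift_space)"
proof -
  define h where "h U = (A_mat Ft L0t ** U, - U, W ** U - U)" for U :: "real^'q^'q"
  have "linear h"
    by (rule linearI)
      (simp_all add: h_def matrix_add_ldistrib matrix_scalar_ac scalar_matrix_assoc[symmetric]
        algebra_simps)
  moreover have "inj h"
    by (rule injI) (simp add: h_def)
  moreover have "ideal_variety E Ft L0t Rt = (+) (Ft, L0t, Rt) ` h ` shift_space"
    unfolding ideal_variety_eq[OF assms] image_image h_def by (simp add: algebra_simps)
  ultimately have "aff_dim (ideal_variety E Ft L0t Rt) = aff_dim (h ` shift_space)"
    by (simp add: aff_dim_translation_eq)
  also have "\<dots> = int (dim (h ` shift_space))"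
    by (rule aff_dim_subspace[OF linear_subspace_image[OF \<open>linear h\<close> subspace_shift_space]])
  also have "dim (h ` shift_space) = dim shift_space"
    using dim_image_eq[OF \<open>linear h\<close>] inj_on_subset[OF \<open>inj h\<close>] by blast
  finally show ?thesis .
qed

lemma W_entry_outside_descendants: "k \<notin> de E j \<Longrightarrow> W $ k $ j = 0"
  using W_entry_nonzero not_trancl_refl unfolding de_def by blast

lemma M_mat_mult_column:
  assumes U: "\<forall>i. i \<notin> ch E j \<longrightarrow> U $ i $ j = 0"
  shows "(M_mat E L0t Rt j *v column j U) $ k = (if (j, k) \<in> E then 0 else (W ** U) $ k $ j)"
proof -
  have "M_mat E L0t Rt j $ k $ i * U $ i $ j = (if (j, k) \<in> E then 0 else W $ k $ i * U $ i $ j)"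
    for i
  proof (cases "U $ i $ j = 0")
    case False
    then have "(j, i) \<in> E"
      using U unfolding ch_def by blast
    moreover have "W $ k $ i = 0" if "k \<notin> de E j"
    proof (rule ccontr)
      assume "W $ k $ i \<noteq> 0"
      then have "(i, k) \<in> E\<^sup>+"
        by (rule W_entry_nonzero)
      with \<open>(j, i) \<in> E\<close> have "(j, k) \<in> E\<^sup>+"
        by (rule trancl_into_trancl2)
      with that not_trancl_refl show False
        unfolding de_def by blast
    qed
    ultimately show ?thesis
      by (auto simp: M_mat_def ch_def Delta_row)
  qed simp
  then show ?thesis
    by (simp add: matrix_vector_mult_def matrix_matrix_mult_def column_def)
qed

definition child_null_space :: "'q \<Rightarrow> (real^'q) set" where
  "child_null_space j = {u. (\<forall>i. i \<notin> ch E j \<longrightarrow> u $ i = 0) \<and> M_mat E L0t Rt j *v u = 0}"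

lemma subspace_child_null_space: "subspace (child_null_space j)"
  unfolding child_null_space_def
  by (rule subspaceI) (simp_all add: matrix_vector_right_distrib matrix_vector_mult_scaleR)

lemma shift_space_iff_columns: "U \<in> shift_space \<longleftrightarrow> (\<forall>j. column j U \<in> child_null_space j)"
proof -
  have supported: "edge_supported E U \<longleftrightarrow> (\<forall>j i. i \<notin> ch E j \<longrightarrow> U $ i $ j = 0)"
    unfolding edge_supported_def ch_def by blast
  moreover have "edge_supported E (W ** U) \<longleftrightarrow> (\<forall>j. M_mat E L0t Rt j *v column j U = 0)"
    if "edge_supported E U"
  proof -
    have "(M_mat E L0t Rt j *v column j U) $ k = (if (j, k) \<in> E then 0 else (W ** U) $ k $ j)"
      for j k
      using M_mat_mult_column that[unfolded supported] by blast
    then show ?thesis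
      unfolding edge_supported_def vec_eq_iff zero_index by (metis (full_types))
  qed
  ultimately show ?thesis
    unfolding shift_space_def child_null_space_def by (auto simp: column_def)
qed

lemma dim_shift_space: "dim shift_space = (\<Sum>j\<in>UNIV. dim (child_null_space j))"
proof -
  have "shift_space = {U. \<forall>j. column j U \<in> child_null_space j}"
    using shift_space_iff_columns by blast
  then show ?thesis
    using dim_columns_in_subspaces[OF subspace_child_null_space] by simp
qed

lemma dim_child_null_space: "dim (child_null_space j) + rank (M_mat E L0t Rt j) = card (ch E j)"
proof -
  define S where "S = {u::real^'q. \<forall>i. i \<notin> ch E j \<longrightarrow> u $ i = 0}"
  have "subspace S"
    unfolding S_def by (rule subspaceI) auto
  have "vec.dim S = card (ch E j)"
    unfolding S_def by (rule dim_substandard_cart)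
  then have "dim S = card (ch E j)"
    by (simp add: dim_vec_eq)
  \<comment> \<open>the columns of \<open>M[j]\<close> outside \<open>ch(j)\<close> vanish\<close>
  have "M_mat E L0t Rt j *v x = M_mat E L0t Rt j *v (\<chi> i. if i \<in> ch E j then x $ i else 0)" for x
    unfolding matrix_vector_mult_def by (auto simp: vec_eq_iff M_mat_def intro!: sum.cong)
  then have "(*v) (M_mat E L0t Rt j) ` S = range ((*v) (M_mat E L0t Rt j))"
    unfolding S_def by (auto simp: image_iff intro!: exI[of _ "\<chi> i. if i \<in> ch E j then _ $ i else 0"])
  moreover have "{x \<in> S. M_mat E L0t Rt j *v x = 0} = child_null_space j"
    unfolding S_def child_null_space_def by simp
  ultimately show ?thesis
    using dim_kernel_plus_dim_image[OF matrix_vector_mul_linear[of "M_mat E L0t Rt j"] \<open>subspace S\<close>]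
      \<open>dim S = card (ch E j)\<close>
    by (simp add: rank_dim_range)
qed

lemma rank_Mb_mat: "rank (Mb_mat E L0t Rt j) = rank (M_mat E L0t Rt j)"
proof (rule rank_eq_if_extra_column_in_column_space)
  have "j \<notin> ch E j"
    using not_trancl_refl unfolding ch_def by blast
  then show "column i (Mb_mat E L0t Rt j) = column i (M_mat E L0t Rt j)" if "i \<noteq> j" for i
    using that by (simp add: column_def Mb_mat_def M_mat_def)
  show "column j (M_mat E L0t Rt j) = 0"
    using \<open>j \<notin> ch E j\<close> by (simp add: column_def M_mat_def vec_eq_iff)
  have "\<forall>i. i \<notin> ch E j \<longrightarrow> L0t $ i $ j = 0"
    using L0t_supported unfolding edge_supported_def ch_def by blast
  moreover have "(W ** L0t) $ k $ j = W $ k $ j" if "(j, k) \<notin> E" for k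
  proof -
    have "W $ k $ j = (Rt - L0t) $ k $ j + (W ** L0t) $ k $ j"
      using arg_cong[where f = "\<lambda>A. A $ k $ j", OF W_eq] by simp
    moreover have "(Rt - L0t) $ k $ j = 0"
      using that Rt_supported L0t_supported by (simp add: edge_supported_def)
    ultimately show ?thesis
      by simp
  qed
  ultimately have "(M_mat E L0t Rt j *v column j L0t) $ k = (if (j, k) \<in> E then 0 else W $ k $ j)"
    for k
    using M_mat_mult_column by simp
  then show "column j (Mb_mat E L0t Rt j) = M_mat E L0t Rt j *v column j L0t"
    using W_entry_outside_descendants \<open>j \<notin> ch E j\<close>
    by (auto simp: vec_eq_iff column_def Mb_mat_def Delta_row ch_def)
qed

lemma c_val_eq_dim: "c_val E L0t Rt j = int (dim (child_null_space j))"
  using dim_child_null_space[of j] unfolding c_val_def rank_Mb_mat by simp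

theorem aff_dim_ideal_variety_eq_sum_c_val:
  assumes "\<forall>k. A_mat Ft L0t $ l $ k \<noteq> 0"
  shows "aff_dim (ideal_variety E Ft L0t Rt) = (\<Sum>j\<in>UNIV. c_val E L0t Rt j)"
  unfolding aff_dim_ideal_variety[OF assms] dim_shift_space c_val_eq_dim by simp

end

section \<open>Genericity\<close>

lemma poly_fun_sum:
  "finite S \<Longrightarrow> (\<And>i. i \<in> S \<Longrightarrow> poly_fun (f i)) \<Longrightarrow> poly_fun (\<lambda>x. \<Sum>i\<in>S. f i x)"
  by (induction S rule: finite_induct) (auto intro: poly_fun.intros)

lemma poly_fun_prod:
  "finite S \<Longrightarrow> (\<And>i. i \<in> S \<Longrightarrow> poly_fun (f i)) \<Longrightarrow> poly_fun (\<lambda>x. \<Prod>i\<in>S. f i x)"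
  by (induction S rule: finite_induct) (auto intro: poly_fun.intros)

lemma poly_fun_linear:
  fixes f :: "'a::euclidean_space \<Rightarrow> real"
  assumes "linear f"
  shows "poly_fun f"
proof -
  have "f = (\<lambda>x. inner (adjoint f 1) x)"
    using adjoint_works[OF assms] by (auto simp: fun_eq_iff inner_commute)
  then show ?thesis
    by (metis pf_lin)
qed

lemma poly_fun_matrix_mult_entry:
  fixes F :: "'a::euclidean_space \<Rightarrow> real^'n^'m" and G :: "'a \<Rightarrow> real^'k^'n"
  assumes "\<And>a b. poly_fun (\<lambda>x. F x $ a $ b)" and "\<And>a b. poly_fun (\<lambda>x. G x $ a $ b)"
  shows "poly_fun (\<lambda>x. (F x ** G x) $ i $ j)"
  unfolding matrix_matrix_mult_def by (auto intro!: poly_fun_sum pf_mult assms)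

lemma poly_fun_neumann_sum_entry:
  fixes L :: "'a::euclidean_space \<Rightarrow> real^'n^'n"
  assumes L: "\<And>a b. poly_fun (\<lambda>x. L x $ a $ b)"
  shows "poly_fun (\<lambda>x. neumann_sum (L x) $ i $ j)"
proof -
  have "poly_fun (\<lambda>x. mat_pow (L x) n $ a $ b)" for n a b
  proof (induction n arbitrary: a b)
    case 0
    show ?case
      using pf_const[of "mat 1 $ a $ b"] by simp
  next
    case (Suc n)
    show ?case
      unfolding mat_pow.simps by (rule poly_fun_matrix_mult_entry[OF L Suc])
  qed
  then show ?thesis
    unfolding neumann_sum_def sum_component by (auto intro: poly_fun_sum)
qed

lemma generically_on_mono:
  assumes "generically_on V P" and "\<And>x. x \<in> V \<Longrightarrow> P x \<Longrightarrow> Q x"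
  shows "generically_on V Q"
  using assms unfolding generically_on_def by metis

lemma generically_A_mat_entries_nonzero:
  fixes E :: "('q::finite \<times> 'q) set"
  assumes acyclic: "acyclic E"
  shows "generically_on (param_space E :: ((real^'q^'p::finite) \<times> (real^'q^'q) \<times> (real^'q^'q)) set)
    (\<lambda>(Ft, L0t, Rt). \<forall>l k. A_mat Ft L0t $ l $ k \<noteq> 0)"
  unfolding generically_on_def
proof (intro exI conjI)
  define P :: "(real^'q^'p) \<times> (real^'q^'q) \<times> (real^'q^'q) \<Rightarrow> real" where
    "P x = (\<Prod>l\<in>UNIV. \<Prod>k\<in>UNIV. (fst x ** neumann_sum (fst (snd x))) $ l $ k)" for x
  have coordinates: "poly_fun (\<lambda>x. fst x $ a $ b)" "poly_fun (\<lambda>x. fst (snd x) $ a' $ b')"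
    for a b a' b'
    by (auto intro!: poly_fun_linear linearI)
  show "poly_fun P"
    unfolding P_def
    by (intro poly_fun_prod poly_fun_matrix_mult_entry poly_fun_neumann_sum_entry coordinates finite)
  have neumann_sum_eq: "neumann_sum L = matrix_inv (mat 1 - L)" if "edge_supported E L" for L :: "real^'q^'q"
    using matrix_inv_one_minus_edge_supported(2)[OF acyclic that] by simp
  have "edge_supported E (0 :: real^'q^'q)"
    by (simp add: edge_supported_def)
  then have "neumann_sum (0 :: real^'q^'q) = mat 1"
    using neumann_sum_eq matrix_inv_eq_right_inverse[of "mat 1" "mat 1"] by simp
  then have "P (\<chi> l k. 1, 0, 0) = 1"
    unfolding P_def by simp
  moreover have "(\<chi> l k. 1, 0, 0) \<in> param_space E"
    using \<open>edge_supported E 0\<close> by (simp add: param_space_def)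
  ultimately show "\<exists>x\<in>param_space E. P x \<noteq> 0"
    by force
  show "\<forall>x\<in>param_space E. P x \<noteq> 0 \<longrightarrow> (\<lambda>(Ft, L0t, Rt). \<forall>l k. A_mat Ft L0t $ l $ k \<noteq> 0) x"
    unfolding P_def param_space_def A_mat_def by (auto simp: neumann_sum_eq)
qed

theorem proposition3p8:
  fixes E :: "('q::finite \<times> 'q) set"
  assumes "CARD('p::finite) \<ge> 2" and "CARD('q) \<ge> 2"
    and "acyclic E"
  shows "generically_on (param_space E :: ((real^'q^'p) \<times> (real^'q^'q) \<times> (real^'q^'q)) set)
           (\<lambda>(Ft, L0t, Rt).
              (\<forall>i j. L0t $ i $ j \<noteq> 0 \<longleftrightarrow> (j, i) \<in> E)
            \<and> (\<forall>k j. Rt $ k $ j \<noteq> 0 \<longleftrightarrow> (j, k) \<in> E)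
            \<and> (\<forall>k j. (j, k) \<in> E \<longrightarrow> Rt $ k $ j \<noteq> L0t $ k $ j)
            \<longrightarrow> aff_dim (ideal_variety E Ft L0t Rt) =
                  (if \<exists>j. c_val E L0t Rt j = -1 then -1
                   else (\<Sum>j\<in>UNIV. c_val E L0t Rt j)))"
  using generically_A_mat_entries_nonzero[OF assms(3)]
proof (rule generically_on_mono, clarify)
  fix Ft :: "real^'q^'p" and L0t Rt :: "real^'q^'q"
  assume "(Ft, L0t, Rt) \<in> param_space E" and nonzero: "\<forall>l k. A_mat Ft L0t $ l $ k \<noteq> 0"
  then interpret soft_interventions E L0t Rt
    using assms(3) by unfold_locales (auto simp: param_space_def)
  have "c_val E L0t Rt j \<noteq> -1" for j
    unfolding c_val_eq_dim by simp
  then show "aff_dim (ideal_variety E Ft L0t Rt) =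
      (if \<exists>j. c_val E L0t Rt j = -1 then -1 else (\<Sum>j\<in>UNIV. c_val E L0t Rt j))"
    using aff_dim_ideal_variety_eq_sum_c_val[OF nonzero[THEN spec]] by simp
qed

end
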